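(* For every $n\ge 2$, the transition monoid of the automaton $\mathcal{V}_n$ is the full transformation monoid $T_n$ of its state set, and the reset threshold of $\mathcal{V}_n$ equals $\frac{n(n-1)}{2}$.
   Context: For a DFA $\langle Q,\Sigma,\delta\rangle$, the transition monoid is the monoid of transformations of $Q$ generated by the actions of the letters; $T_n$ denotes the monoid of all maps from an $n$-element set to itself. The reset threshold is the minimum length of a word $w$ with $|Q\cdot w|=1$ (words act letter by letter from left to right). The automaton $\mathcal{V}_n$ has states $q_0,\dots,q_{n-1}$ and letters $a_1,\dots,a_n$: for $1\le i\le n-1$, the letter $a_i$ swaps $q_{i-1}$ and $q_i$ and fixes all other states; the letter $a_n$ maps both $q_0$ and $q_1$ to $q_0$ and fixes $q_2,\dots,q_{n-1}$. *)

theory Defs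
  imports "HOL-Library.FuncSet"
begin

definition word_act :: "('q \<Rightarrow> 'a \<Rightarrow> 'q) \<Rightarrow> 'q \<Rightarrow> 'a list \<Rightarrow> 'q" where
  "word_act delta q w = foldl delta q w"

definition transition_monoid ::
  "'q set \<Rightarrow> 'a set \<Rightarrow> ('q \<Rightarrow> 'a \<Rightarrow> 'q) \<Rightarrow> ('q \<Rightarrow> 'q) set" where
  "transition_monoid Q A delta =
     {restrict (\<lambda>q. word_act delta q w) Q | w. w \<in> lists A}"

definition full_transformation_monoid :: "'q set \<Rightarrow> ('q \<Rightarrow> 'q) set" where
  "full_transformation_monoid Q = Q \<rightarrow>\<^sub>E Q"

definition synchronizing_word :: "'q set \<Rightarrow> 'a set \<Rightarrow> ('q \<Rightarrow> 'a \<Rightarrow> 'q) \<Rightarrow> 'a list \<Rightarrow> bool" where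
  "synchronizing_word Q A delta w \<longleftrightarrow>
     w \<in> lists A \<and> card ((\<lambda>q. word_act delta q w) ` Q) = 1"

definition reset_threshold :: "'q set \<Rightarrow> 'a set \<Rightarrow> ('q \<Rightarrow> 'a \<Rightarrow> 'q) \<Rightarrow> nat" where
  "reset_threshold Q A delta =
     (LEAST m. \<exists>w. synchronizing_word Q A delta w \<and> length w = m)"

text \<open>The automaton V_n: states q_0..q_{n-1} encoded as 0..n-1, letters a_1..a_n encoded as 1..n.\<close>
definition V_states :: "nat \<Rightarrow> nat set" where
  "V_states n = {0..<n}"

definition V_letters :: "nat \<Rightarrow> nat set" where
  "V_letters n = {1..n}"

definition V_delta :: "nat \<Rightarrow> nat \<Rightarrow> nat \<Rightarrow> nat" where
  "V_delta n q i =
     (if 1 \<le> i \<and> i \<le> n - 1 then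
        (if q = i - 1 then i else if q = i then i - 1 else q)
      else if i = n then
        (if q = 0 \<or> q = 1 then 0 else q)
      else q)"

end

theory Submission
  imports Defs "HOL-Combinatorics.Permutations"
begin

text \<open>The letters \<open>a\<^sub>i\<close> with \<open>i < n\<close> induce the adjacent transpositions, which generate the
  symmetric group, and \<open>a\<^sub>n\<close> induces a map of rank \<open>n - 1\<close>; conjugating it by permutations
  yields every elementary collapse \<open>y \<mapsto> x\<close>, and every non-permutation is obtained from a map
  of larger image by precomposing such a collapse.

  For the reset threshold, a subset \<open>S\<close> of \<open>{0, \<dots>, n - 1}\<close> with at least two elements gets
  the potential \<open>\<Sum>S\<close>. A swap decreases the sum by at most one and the merge letter removes at
  most the element \<open>1\<close>, so every letter lowers the potential by at most one; since the full
  state set has potential \<open>n(n - 1)/2\<close> and singletons have potential \<open>0\<close>, every synchronizing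
  word is at least that long. A word of exactly this length moves the states \<open>1, 2, \<dots>, n - 1\<close>
  in turn down to \<open>1\<close> and merges each into \<open>0\<close>.\<close>

locale transformation_monoid =
  fixes Q :: "'a set" and M :: "('a \<Rightarrow> 'a) set"
  assumes id_mem: "id \<in> M"
    and comp_mem: "f \<in> M \<Longrightarrow> g \<in> M \<Longrightarrow> f ` Q \<subseteq> Q \<Longrightarrow> g \<circ> f \<in> M"
    and cong_mem: "f \<in> M \<Longrightarrow> (\<And>q. q \<in> Q \<Longrightarrow> f q = g q) \<Longrightarrow> g \<in> M"
begin

lemma permutes_mem:
  assumes "finite Q" and transpose_mem: "\<And>a b. a \<in> Q \<Longrightarrow> b \<in> Q \<Longrightarrow> transpose a b \<in> M"
    and "p permutes Q"
  shows "p \<in> M"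
  using \<open>p permutes Q\<close> \<open>finite Q\<close>
proof (induction rule: permutes_induct)
  case id
  show ?case by (rule id_mem)
next
  case (swap a b p)
  then show ?case
    by (intro comp_mem transpose_mem) (auto simp: permutes_image)
qed

lemma collapse_mem:
  assumes permutes_mem: "\<And>p. p permutes Q \<Longrightarrow> p \<in> M"
    and "a \<in> Q" "b \<in> Q" "a \<noteq> b" "id(b := a) \<in> M"
    and "x \<in> Q" "y \<in> Q" "x \<noteq> y"
  shows "id(y := x) \<in> M"
proof -
  define p where "p = transpose (transpose x a y) b \<circ> transpose x a"
  have p: "p permutes Q"
    unfolding p_def using assms by (intro permutes_compose permutes_swap_id) (auto simp: transpose_def)
  have "p x = a" "p y = b"
    using assms by (auto simp: p_def transpose_def)
  have "id(b := a) \<circ> p \<in> M"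
    using assms p by (intro comp_mem[OF permutes_mem]) (auto simp: permutes_image)
  then have "inv p \<circ> (id(b := a) \<circ> p) \<in> M"
    using assms p by (intro comp_mem permutes_mem[OF permutes_inv]) (auto simp: permutes_in_image)
  then show ?thesis
  proof (rule cong_mem)
    fix q
    show "(inv p \<circ> (id(b := a) \<circ> p)) q = (id(y := x)) q"
      using \<open>p x = a\<close> \<open>p y = b\<close> permutes_inverses[OF p] permutes_inj[OF p]
      by (auto simp: inj_eq)
  qed
qed

lemma all_maps_mem:
  assumes "finite Q"
    and permutes_mem: "\<And>p. p permutes Q \<Longrightarrow> p \<in> M"
    and collapse_mem: "\<And>x y. x \<in> Q \<Longrightarrow> y \<in> Q \<Longrightarrow> x \<noteq> y \<Longrightarrow> id(y := x) \<in> M"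
    and "f ` Q \<subseteq> Q"
  shows "f \<in> M"
  using \<open>f ` Q \<subseteq> Q\<close>
proof (induction "card Q - card (f ` Q)" arbitrary: f rule: less_induct)
  case less
  show ?case
  proof (cases "inj_on f Q")
    case True
    define p where "p q = (if q \<in> Q then f q else q)" for q
    have "bij_betw f Q Q"
      using True less.prems \<open>finite Q\<close> by (simp add: bij_betw_def endo_inj_surj)
    then have "p permutes Q"
      by (intro bij_imp_permutes) (auto simp: p_def cong: bij_betw_cong)
    then show ?thesis
      by (rule cong_mem[OF permutes_mem]) (simp add: p_def)
  next
    case False
    then obtain x y where xy: "x \<in> Q" "y \<in> Q" "x \<noteq> y" "f x = f y"
      unfolding inj_on_def by blast
    obtain z where z: "z \<in> Q" "z \<notin> f ` Q"
      using False finite_surj_inj[OF \<open>finite Q\<close>] by blast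
    define h where "h = f(y := z)"
    have "f ` Q = insert (f x) (f ` (Q - {y}))"
      using xy by (metis image_insert insert_Diff)
    moreover have "f x \<in> f ` (Q - {y})"
      using xy by blast
    ultimately have "f ` Q = f ` (Q - {y})"
      by (simp add: insert_absorb)
    moreover have "h ` Q = insert z (h ` (Q - {y}))"
      using xy by (auto simp: h_def)
    moreover have "h ` (Q - {y}) = f ` (Q - {y})"
      by (simp add: h_def)
    ultimately have "h ` Q = insert z (f ` Q)"
      by (simp only:)
    moreover have "card (f ` Q) < card Q"
      using z less.prems \<open>finite Q\<close> by (intro psubset_card_mono) auto
    ultimately have "card Q - card (h ` Q) < card Q - card (f ` Q)"
      using z \<open>finite Q\<close> by simp
    moreover have "h ` Q \<subseteq> Q"
      using less.prems z by (auto simp: h_def)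
    ultimately have "h \<in> M"
      by (rule less.hyps)
    then have "h \<circ> id(y := x) \<in> M"
      using xy by (intro comp_mem collapse_mem) auto
    then show ?thesis
      by (rule cong_mem) (use xy in \<open>auto simp: h_def\<close>)
  qed
qed

theorem mem_if_transpositions_and_collapse_mem:
  assumes "finite Q"
    and transpose_mem: "\<And>x y. x \<in> Q \<Longrightarrow> y \<in> Q \<Longrightarrow> transpose x y \<in> M"
    and "a \<in> Q" "b \<in> Q" "a \<noteq> b" "id(b := a) \<in> M"
    and "f ` Q \<subseteq> Q"
  shows "f \<in> M"
proof -
  have permutes_mem: "p \<in> M" if "p permutes Q" for p
    using \<open>finite Q\<close> transpose_mem that by (rule permutes_mem)
  have collapse_mem: "id(y := x) \<in> M" if "x \<in> Q" "y \<in> Q" "x \<noteq> y" for x y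
    by (rule collapse_mem[OF permutes_mem]) (use assms that in auto)
  show ?thesis
    by (rule all_maps_mem[OF \<open>finite Q\<close> permutes_mem collapse_mem \<open>f ` Q \<subseteq> Q\<close>])
qed

end

lemma transpose_mem_of_adjacent:
  fixes M :: "(nat \<Rightarrow> nat) set"
  assumes "transformation_monoid Q M" and "{..<n} \<subseteq> Q"
    and adjacent_mem: "\<And>c. Suc c < n \<Longrightarrow> transpose c (Suc c) \<in> M"
    and "a < n" "b < n"
  shows "transpose a b \<in> M"
proof -
  interpret transformation_monoid Q M by fact
  have ordered: "transpose a b \<in> M" if "a < b" "b < n" for a b
    using that
  proof (induction b)
    case 0
    then show ?case by simp
  next
    case (Suc c)
    show ?case
    proof (cases "a = c")
      case True
      then show ?thesis using Suc.prems adjacent_mem by simp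
    next
      case False
      have "transpose a c \<in> M"
        using False Suc by simp
      moreover have "a \<in> Q" "c \<in> Q" "Suc c \<in> Q"
        using Suc.prems assms(2) by auto
      ultimately have "transpose c (Suc c) \<circ> transpose a c \<in> M"
        using Suc.prems by (intro comp_mem[OF _ adjacent_mem]) simp_all
      then have "transpose c (Suc c) \<circ> transpose a c \<circ> transpose c (Suc c) \<in> M"
        using Suc.prems \<open>c \<in> Q\<close> \<open>Suc c \<in> Q\<close> by (intro comp_mem[OF adjacent_mem]) simp_all
      moreover have "transpose c (Suc c) \<circ> transpose a c \<circ> transpose c (Suc c) = transpose a (Suc c)"
        using transpose_comp_triple[of "Suc c" a c] Suc.prems False by (simp add: transpose_commute)
      ultimately show ?thesis
        by simp
    qed
  qed
  show ?thesis
  proof (cases a b rule: linorder_cases)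
    case less
    then show ?thesis using ordered \<open>b < n\<close> by simp
  next
    case equal
    then show ?thesis using id_mem by simp
  next
    case greater
    then show ?thesis using ordered[of b a] \<open>a < n\<close> by (simp add: transpose_commute)
  qed
qed

lemma word_act_Nil [simp]: "word_act delta q [] = q"
  by (simp add: word_act_def)

lemma word_act_Cons [simp]: "word_act delta q (a # w) = word_act delta (delta q a) w"
  by (simp add: word_act_def)

lemma word_act_append [simp]: "word_act delta q (u @ v) = word_act delta (word_act delta q u) v"
  by (simp add: word_act_def)

lemma word_act_closed:
  assumes "\<And>q a. q \<in> Q \<Longrightarrow> a \<in> A \<Longrightarrow> delta q a \<in> Q" and "q \<in> Q" "w \<in> lists A"
  shows "word_act delta q w \<in> Q"
  using assms(2,3) by (induction w arbitrary: q) (auto intro: assms(1))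

definition induced_maps :: "'q set \<Rightarrow> 'a set \<Rightarrow> ('q \<Rightarrow> 'a \<Rightarrow> 'q) \<Rightarrow> ('q \<Rightarrow> 'q) set" where
  "induced_maps Q A delta = {f. \<exists>w\<in>lists A. \<forall>q\<in>Q. word_act delta q w = f q}"

lemma transformation_monoid_induced_maps: "transformation_monoid Q (induced_maps Q A delta)"
proof
  show "id \<in> induced_maps Q A delta"
    unfolding induced_maps_def by (auto intro!: bexI[of _ "[]"])
next
  fix f g assume "f \<in> induced_maps Q A delta" "g \<in> induced_maps Q A delta" "f ` Q \<subseteq> Q"
  then obtain u v where "u \<in> lists A" "\<forall>q\<in>Q. word_act delta q u = f q"
    "v \<in> lists A" "\<forall>q\<in>Q. word_act delta q v = g q"
    unfolding induced_maps_def by blast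
  with \<open>f ` Q \<subseteq> Q\<close> show "g \<circ> f \<in> induced_maps Q A delta"
    unfolding induced_maps_def by (auto intro!: bexI[of _ "u @ v"])
next
  fix f g assume "f \<in> induced_maps Q A delta" "\<And>q. q \<in> Q \<Longrightarrow> f q = g q"
  then show "g \<in> induced_maps Q A delta"
    unfolding induced_maps_def by auto
qed

lemma letter_mem_induced_maps: "a \<in> A \<Longrightarrow> (\<lambda>q. delta q a) \<in> induced_maps Q A delta"
  unfolding induced_maps_def by (auto intro!: bexI[of _ "[a]"])

lemma transition_monoid_eq_full_transformation_monoid:
  assumes closed: "\<And>q a. q \<in> Q \<Longrightarrow> a \<in> A \<Longrightarrow> delta q a \<in> Q"
    and induced: "\<And>f. f ` Q \<subseteq> Q \<Longrightarrow> f \<in> induced_maps Q A delta"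
  shows "transition_monoid Q A delta = full_transformation_monoid Q"
proof
  show "transition_monoid Q A delta \<subseteq> full_transformation_monoid Q"
    unfolding transition_monoid_def full_transformation_monoid_def
    by (auto intro!: word_act_closed[of Q A delta, OF closed])
next
  show "full_transformation_monoid Q \<subseteq> transition_monoid Q A delta"
  proof
    fix f assume f: "f \<in> full_transformation_monoid Q"
    then have "f ` Q \<subseteq> Q"
      unfolding full_transformation_monoid_def by auto
    then obtain w where w: "w \<in> lists A" "\<forall>q\<in>Q. word_act delta q w = f q"
      using induced unfolding induced_maps_def by blast
    have "f = restrict f Q"
      using f by (simp add: full_transformation_monoid_def)
    also have "\<dots> = restrict (\<lambda>q. word_act delta q w) Q"
      using w(2) by (intro restrict_ext) simp
    finally show "f \<in> transition_monoid Q A delta"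
      using w(1) unfolding transition_monoid_def by blast
  qed
qed

lemma V_delta_swap: "1 \<le> i \<Longrightarrow> i < n \<Longrightarrow> V_delta n q i = transpose (i - 1) i q"
  by (auto simp: V_delta_def transpose_def)

lemma V_delta_merge: "2 \<le> n \<Longrightarrow> V_delta n q n = (id(1 := 0)) q"
  by (auto simp: V_delta_def)

lemma V_delta_closed: "q \<in> V_states n \<Longrightarrow> a \<in> V_letters n \<Longrightarrow> V_delta n q a \<in> V_states n"
  by (auto simp: V_delta_def V_states_def)

lemma V_transition_monoid:
  assumes "n \<ge> 2"
  shows "transition_monoid (V_states n) (V_letters n) (V_delta n) = full_transformation_monoid (V_states n)"
proof (rule transition_monoid_eq_full_transformation_monoid[OF V_delta_closed])
  let ?M = "induced_maps (V_states n) (V_letters n) (V_delta n)"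
  interpret transformation_monoid "V_states n" ?M
    by (rule transformation_monoid_induced_maps)
  have letter_mem: "(\<lambda>q. V_delta n q i) \<in> ?M" if "1 \<le> i" "i \<le> n" for i
    using that by (intro letter_mem_induced_maps) (simp add: V_letters_def)
  have adjacent_mem: "transpose c (Suc c) \<in> ?M" if "Suc c < n" for c
    by (rule cong_mem[OF letter_mem[of "Suc c"]]) (use that in \<open>simp_all add: V_delta_swap\<close>)
  have transpose_mem: "transpose x y \<in> ?M" if "x \<in> V_states n" "y \<in> V_states n" for x y
    by (rule transpose_mem_of_adjacent[OF transformation_monoid_axioms _ adjacent_mem])
      (use that in \<open>auto simp: V_states_def\<close>)
  have collapse_mem: "id(1 := 0) \<in> ?M"
    by (rule cong_mem[OF letter_mem[of n]]) (use assms in \<open>simp_all add: V_delta_merge\<close>)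
  show "f \<in> ?M" if "f ` V_states n \<subseteq> V_states n" for f
    by (rule mem_if_transpositions_and_collapse_mem[OF _ transpose_mem _ _ _ collapse_mem that])
      (use assms in \<open>simp_all add: V_states_def\<close>)
qed

definition potential :: "nat set \<Rightarrow> nat" where
  "potential S = (if card S \<le> 1 then 0 else \<Sum>S)"

lemma potential_transpose_step:
  assumes "finite S" "1 \<le> a"
  shows "potential S \<le> potential (transpose (a - 1) a ` S) + 1"
proof -
  let ?t = "transpose (a - 1) a"
  have "\<Sum>S \<le> (\<Sum>x\<in>S. ?t x + (if x = a then 1 else 0))"
    by (intro sum_mono) (use assms in \<open>auto simp: transpose_def\<close>)
  also have "\<dots> = \<Sum>(?t ` S) + (\<Sum>x\<in>S. if x = a then 1 else 0)"
    by (simp add: sum.distrib sum.reindex)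
  also have "(\<Sum>x\<in>S. if x = a then 1 else 0) \<le> (1::nat)"
    using assms by (simp add: sum.delta)
  finally show ?thesis
    by (simp add: potential_def card_image)
qed

lemma sum_le_sum_merge_image:
  assumes "finite S"
  shows "\<Sum>S \<le> \<Sum>(id(1 := 0) ` S) + (1::nat)"
proof -
  define m :: "nat \<Rightarrow> nat" where "m = id(1 := 0)"
  have "S - {1} \<subseteq> m ` S"
    by (auto simp: m_def intro: image_eqI)
  have "\<Sum>S \<le> \<Sum>(S - {1}) + 1"
    using assms by (cases "1 \<in> S") (simp_all add: sum_diff1_nat)
  also have "\<Sum>(S - {1}) + 1 \<le> \<Sum>(m ` S) + 1"
    using assms \<open>S - {1} \<subseteq> m ` S\<close> by (simp add: sum_mono2)
  finally show ?thesis
    by (simp add: m_def)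
qed

lemma subset_zero_one_if_merge_image_card_le_1:
  assumes "finite S" "card S \<ge> 2" "card (id(1 := 0) ` S) \<le> 1"
  shows "S \<subseteq> {0, 1 :: nat}"
proof
  define m :: "nat \<Rightarrow> nat" where "m = id(1 := 0)"
  have card_m: "card (m ` S) \<le> 1"
    using assms(3) by (simp add: m_def)
  have sub: "S - {1} \<subseteq> m ` S"
    by (auto simp: m_def intro: image_eqI)
  have "1 \<in> S"
  proof (rule ccontr)
    assume "1 \<notin> S"
    then have "card S \<le> card (m ` S)"
      using assms(1) sub by (intro card_mono) auto
    with assms(2) card_m show False by simp
  qed
  then have "0 \<in> m ` S"
    unfolding m_def by (metis fun_upd_same imageI)
  fix x assume "x \<in> S"
  show "x \<in> {0, 1}"
  proof (rule ccontr)
    assume "x \<notin> {0, 1}"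
    then have "{0, x} \<subseteq> m ` S"
      using \<open>0 \<in> m ` S\<close> sub \<open>x \<in> S\<close> by auto
    then have "card {0, x} \<le> card (m ` S)"
      using assms(1) by (intro card_mono) auto
    with card_m \<open>x \<notin> {0, 1}\<close> show False
      by simp
  qed
qed

lemma potential_merge_step:
  assumes "finite S"
  shows "potential S \<le> potential (id(1 := 0) ` S) + 1"
proof (cases "card S \<le> 1 \<or> card (id(1 := 0) ` S) \<ge> 2")
  case True
  then show ?thesis
    using sum_le_sum_merge_image[OF assms] by (auto simp: potential_def)
next
  case False
  then have "S \<subseteq> {0, 1}"
    using assms by (intro subset_zero_one_if_merge_image_card_le_1) auto
  then have "\<Sum>S \<le> \<Sum>{0::nat, 1}"
    by (intro sum_mono2) auto
  then show ?thesis
    using False by (simp add: potential_def)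
qed

lemma potential_letter_step:
  assumes "n \<ge> 2" "a \<in> V_letters n" "finite S"
  shows "potential S \<le> potential ((\<lambda>q. V_delta n q a) ` S) + 1"
proof (cases "a = n")
  case True
  then have "(\<lambda>q. V_delta n q a) = id(1 := 0)"
    using assms by (auto simp: fun_eq_iff V_delta_merge simp del: fun_upd_apply)
  with potential_merge_step[OF assms(3)] show ?thesis
    by (simp only:)
next
  case False
  then have "(\<lambda>q. V_delta n q a) = transpose (a - 1) a"
    using assms by (auto simp: fun_eq_iff V_delta_swap V_letters_def)
  moreover have "1 \<le> a"
    using assms(2) by (simp add: V_letters_def)
  ultimately show ?thesis
    using potential_transpose_step[OF assms(3)] by (simp only:)
qed

lemma potential_word_step:
  assumes "n \<ge> 2" "w \<in> lists (V_letters n)" "finite S"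
  shows "potential S \<le> potential ((\<lambda>q. word_act (V_delta n) q w) ` S) + length w"
  using assms(2,3)
proof (induction w arbitrary: S)
  case Nil
  then show ?case by simp
next
  case (Cons a w)
  have "potential S \<le> potential ((\<lambda>q. V_delta n q a) ` S) + 1"
    by (rule potential_letter_step) (use Cons assms(1) in auto)
  also have "\<dots> \<le> potential ((\<lambda>q. word_act (V_delta n) q w) ` (\<lambda>q. V_delta n q a) ` S) + length w + 1"
    using Cons by simp
  finally show ?case
    by (simp add: image_image)
qed

lemma V_synchronizing_word_length:
  assumes "n \<ge> 2" "synchronizing_word (V_states n) (V_letters n) (V_delta n) w"
  shows "n * (n - 1) div 2 \<le> length w"
proof -
  have "potential {0..<n} \<le> potential ((\<lambda>q. word_act (V_delta n) q w) ` {0..<n}) + length w"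
    using assms unfolding synchronizing_word_def by (intro potential_word_step) auto
  moreover have "potential ((\<lambda>q. word_act (V_delta n) q w) ` {0..<n}) = 0"
    using assms unfolding synchronizing_word_def V_states_def potential_def by simp
  moreover have "potential {0..<n} = n * (n - 1) div 2"
    using assms unfolding potential_def by (simp add: Sum_Ico_nat)
  ultimately show ?thesis by simp
qed

primrec descent :: "nat \<Rightarrow> nat list" where
  "descent 0 = []"
| "descent (Suc k) = Suc (Suc k) # descent k"

definition V_sync_block :: "nat \<Rightarrow> nat \<Rightarrow> nat list" where
  "V_sync_block n k = descent k @ [n]"

definition V_sync_word :: "nat \<Rightarrow> nat list" where
  "V_sync_word n = concat (map (V_sync_block n) [0..<n - 1])"

lemma word_act_descent:
  assumes "Suc k < n" "q = 0 \<or> Suc k \<le> q"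
  shows "word_act (V_delta n) q (descent k) = (if q = Suc k then 1 else q)"
  using assms
proof (induction k arbitrary: q)
  case 0
  then show ?case by simp
next
  case (Suc k)
  define r where "r = transpose (Suc k) (Suc (Suc k)) q"
  have "word_act (V_delta n) q (descent (Suc k)) = word_act (V_delta n) r (descent k)"
    using Suc.prems by (simp add: V_delta_swap r_def)
  also have "\<dots> = (if r = Suc k then 1 else r)"
    by (rule Suc.IH) (use Suc.prems in \<open>auto simp: r_def transpose_def\<close>)
  also have "\<dots> = (if q = Suc (Suc k) then 1 else q)"
    using Suc.prems by (auto simp: r_def transpose_def)
  finally show ?case .
qed

lemma V_sync_block_image:
  assumes "n \<ge> 2" "Suc k < n"
  shows "(\<lambda>q. word_act (V_delta n) q (V_sync_block n k)) ` insert 0 {Suc k..<n}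
       = insert 0 {Suc (Suc k)..<n}"
proof -
  have "word_act (V_delta n) q (V_sync_block n k) = (if q = Suc k then 0 else q)"
    if "q \<in> insert 0 {Suc k..<n}" for q
    using that assms by (auto simp: V_sync_block_def word_act_descent V_delta_merge)
  then have "(\<lambda>q. word_act (V_delta n) q (V_sync_block n k)) ` insert 0 {Suc k..<n}
       = (\<lambda>q. if q = Suc k then 0 else q) ` insert 0 {Suc k..<n}"
    by (rule image_cong[OF refl])
  also have "\<dots> = insert 0 {Suc (Suc k)..<n}"
    by (auto simp: image_iff)
  finally show ?thesis .
qed

lemma V_sync_prefix_image:
  assumes "n \<ge> 2" "m < n"
  shows "(\<lambda>q. word_act (V_delta n) q (concat (map (V_sync_block n) [0..<m]))) ` {0..<n}
       = insert 0 {Suc m..<n}"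
  using assms(2)
proof (induction m)
  case 0
  then show ?case by auto
next
  case (Suc m)
  have "(\<lambda>q. word_act (V_delta n) q (concat (map (V_sync_block n) [0..<Suc m]))) ` {0..<n}
      = (\<lambda>q. word_act (V_delta n) q (V_sync_block n m))
          ` (\<lambda>q. word_act (V_delta n) q (concat (map (V_sync_block n) [0..<m]))) ` {0..<n}"
    by (simp add: image_image)
  also have "\<dots> = (\<lambda>q. word_act (V_delta n) q (V_sync_block n m)) ` insert 0 {Suc m..<n}"
    using Suc by simp
  also have "\<dots> = insert 0 {Suc (Suc m)..<n}"
    using assms(1) Suc.prems by (rule V_sync_block_image)
  finally show ?case .
qed

lemma length_descent: "length (descent k) = k"
  by (induction k) simp_all

lemma set_descent: "set (descent k) = {2..Suc k}"
  by (induction k) auto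

lemma length_V_sync_word: "length (V_sync_word n) = n * (n - 1) div 2"
proof -
  have "2 * length (concat (map (V_sync_block n) [0..<m])) = m * Suc m" for m
    by (induction m) (simp_all add: V_sync_block_def length_descent)
  from this[of "n - 1"] show ?thesis
    by (cases n) (simp_all add: V_sync_word_def)
qed

lemma V_sync_word_synchronizing:
  assumes "n \<ge> 2"
  shows "synchronizing_word (V_states n) (V_letters n) (V_delta n) (V_sync_word n)"
proof -
  have "(\<lambda>q. word_act (V_delta n) q (V_sync_word n)) ` {0..<n} = {0}"
    using V_sync_prefix_image[OF assms, of "n - 1"] assms by (simp add: V_sync_word_def)
  moreover have "V_sync_word n \<in> lists (V_letters n)"
    using assms by (auto simp: V_sync_word_def V_sync_block_def V_letters_def set_descent)
  ultimately show ?thesis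
    by (simp add: synchronizing_word_def V_states_def)
qed

lemma reset_threshold_eqI:
  assumes "synchronizing_word Q A delta w" "length w = m"
    and "\<And>w. synchronizing_word Q A delta w \<Longrightarrow> m \<le> length w"
  shows "reset_threshold Q A delta = m"
  unfolding reset_threshold_def using assms by (intro Least_equality) auto

theorem theorem3:
  fixes n :: nat
  assumes "n \<ge> 2"
  shows "transition_monoid (V_states n) (V_letters n) (V_delta n)
           = full_transformation_monoid (V_states n)
       \<and> reset_threshold (V_states n) (V_letters n) (V_delta n) = n * (n - 1) div 2"
proof
  show "transition_monoid (V_states n) (V_letters n) (V_delta n) = full_transformation_monoid (V_states n)"
    using assms by (rule V_transition_monoid)
  show "reset_threshold (V_states n) (V_letters n) (V_delta n) = n * (n - 1) div 2"
    using V_sync_word_synchronizing[OF assms] length_V_sync_word V_synchronizing_word_length[OF assms]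
    by (rule reset_threshold_eqI)
qed

end
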